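(* Let $a,b\in\mathbb{C}$ be such that $X=X_{a,b}$ is smooth. If $a^2-ab+b^2\neq0$, then neither $\pi_x$ nor $\pi_y$ contracts any curve. If $a\neq b$, then $\pi_z$ contracts no curve.
   Context: $X_{a,b}\subset\mathbb{P}^1_x\times\mathbb{P}^1_y\times\mathbb{P}^1_z$ is the surface defined by $Q_a z_0^2+(x_0^2y_0^2+x_1^2y_1^2)z_0z_1+Q_b z_1^2=0$ with $Q_c=x_0^2y_1^2+c\,x_0x_1y_0y_1+x_1^2y_0^2$. $\pi_x:X\to\mathbb{P}^1_y\times\mathbb{P}^1_z$, $\pi_y:X\to\mathbb{P}^1_x\times\mathbb{P}^1_z$, $\pi_z:X\to\mathbb{P}^1_x\times\mathbb{P}^1_y$ are the restrictions of the projections. *)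

theory Defs
  imports "HOL-Analysis.Analysis"
begin

text \<open>Points of the complex projective line P^1, represented by normalized
  homogeneous coordinates: [1:t] for t in C, and the point at infinity [0:1].
  Every point [u0:u1] of P^1 has exactly one such representative.\<close>
definition P1 :: "(complex \<times> complex) set" where
  "P1 = {(1, t) | t. True} \<union> {(0, 1)}"

type_synonym pt3 = "(complex \<times> complex) \<times> (complex \<times> complex) \<times> (complex \<times> complex)"

definition Q :: "complex \<Rightarrow> complex \<times> complex \<Rightarrow> complex \<times> complex \<Rightarrow> complex" where
  "Q c x y = (fst x)^2 * (snd y)^2 + c * fst x * snd x * fst y * snd y + (snd x)^2 * (fst y)^2"

definition Fab :: "complex \<Rightarrow> complex \<Rightarrow> complex \<Rightarrow> complex \<Rightarrow> complex \<Rightarrow> complex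
                    \<Rightarrow> complex \<Rightarrow> complex \<Rightarrow> complex" where
  "Fab a b x0 x1 y0 y1 z0 z1 =
     Q a (x0, x1) (y0, y1) * z0^2
     + (x0^2 * y0^2 + x1^2 * y1^2) * z0 * z1
     + Q b (x0, x1) (y0, y1) * z1^2"

definition Xab :: "complex \<Rightarrow> complex \<Rightarrow> pt3 set" where
  "Xab a b = {(x, y, z). x \<in> P1 \<and> y \<in> P1 \<and> z \<in> P1 \<and>
                 Fab a b (fst x) (snd x) (fst y) (snd y) (fst z) (snd z) = 0}"

text \<open>Jacobian criterion: a point of the hypersurface X is singular iff all six
  partial derivatives of the defining multihomogeneous polynomial vanish there.
  X is smooth iff it has no singular point.\<close>
definition singular_point :: "complex \<Rightarrow> complex \<Rightarrow> pt3 \<Rightarrow> bool" where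
  "singular_point a b p = (case p of ((x0, x1), (y0, y1), (z0, z1)) \<Rightarrow>
      deriv (\<lambda>t. Fab a b t x1 y0 y1 z0 z1) x0 = 0 \<and>
      deriv (\<lambda>t. Fab a b x0 t y0 y1 z0 z1) x1 = 0 \<and>
      deriv (\<lambda>t. Fab a b x0 x1 t y1 z0 z1) y0 = 0 \<and>
      deriv (\<lambda>t. Fab a b x0 x1 y0 t z0 z1) y1 = 0 \<and>
      deriv (\<lambda>t. Fab a b x0 x1 y0 y1 t z1) z0 = 0 \<and>
      deriv (\<lambda>t. Fab a b x0 x1 y0 y1 z0 t) z1 = 0)"

definition smooth_X :: "complex \<Rightarrow> complex \<Rightarrow> bool" where
  "smooth_X a b \<longleftrightarrow> (\<forall>p \<in> Xab a b. \<not> singular_point a b p)"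

definition pi_x :: "pt3 \<Rightarrow> (complex \<times> complex) \<times> (complex \<times> complex)" where
  "pi_x p = (case p of (x, y, z) \<Rightarrow> (y, z))"
definition pi_y :: "pt3 \<Rightarrow> (complex \<times> complex) \<times> (complex \<times> complex)" where
  "pi_y p = (case p of (x, y, z) \<Rightarrow> (x, z))"
definition pi_z :: "pt3 \<Rightarrow> (complex \<times> complex) \<times> (complex \<times> complex)" where
  "pi_z p = (case p of (x, y, z) \<Rightarrow> (x, y))"

text \<open>A morphism f : S -> T contracts a curve iff some curve of S is mapped to a
  point, i.e. some fibre of f on S is positive dimensional. Here fibres are
  Zariski-closed subsets of a P^1, so positive-dimensional iff infinite.\<close>
definition contracts_curve :: "('a \<Rightarrow> 'b) \<Rightarrow> 'a set \<Rightarrow> bool" where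
  "contracts_curve f S \<longleftrightarrow> (\<exists>q. infinite {p \<in> S. f p = q})"

end

theory Submission
  imports Defs "HOL-Computational_Algebra.Polynomial"
begin

text \<open>The fibre of \<open>pi_x\<close>
  over a point \<open>(y, z)\<close> is the zero set in \<open>P\<^sup>1\<^sub>x\<close> of a binary quadratic form in
  \<open>(x\<^sub>0, x\<^sub>1)\<close> whose coefficients depend on \<open>(y, z)\<close>, so it is infinite only if all three
  coefficients vanish. Solving these three equations on \<open>P\<^sup>1 \<times> P\<^sup>1\<close> forces
  \<open>a = -b s\<^sup>2\<close> with \<open>s\<^sup>4 + s\<^sup>2 + 1 = 0\<close>, hence \<open>a\<^sup>2 - a b + b\<^sup>2 = 0\<close>. The case of
  \<open>pi_y\<close> follows by the symmetry \<open>x \<leftrightarrow> y\<close> of the equation. For \<open>pi_z\<close> the outer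
  coefficients \<open>Q\<^sub>a\<close> and \<open>Q\<^sub>b\<close> differ by \<open>(a - b) x\<^sub>0 x\<^sub>1 y\<^sub>0 y\<^sub>1\<close>, and together with the middle
  coefficient they cannot all vanish when \<open>a \<noteq> b\<close>.\<close>

lemma P1_cases [consumes 1, case_names affine infinity]:
  assumes "u \<in> P1"
  obtains t where "u = (1, t)" | "u = (0, 1)"
  using assms unfolding P1_def by auto

lemma finite_P1_zeros_quadratic_form:
  fixes A B C :: complex
  assumes "\<not> (A = 0 \<and> B = 0 \<and> C = 0)"
  shows "finite {u \<in> P1. A * (fst u)^2 + B * fst u * snd u + C * (snd u)^2 = 0}"
proof -
  have "[:A, B, C:] \<noteq> 0"
    using assms by auto
  then have "finite {t. poly [:A, B, C:] t = 0}"
    by (rule poly_roots_finite)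
  moreover have "{u \<in> P1. A * (fst u)^2 + B * fst u * snd u + C * (snd u)^2 = 0}
      \<subseteq> insert (0, 1) ((\<lambda>t. (1, t)) ` {t. poly [:A, B, C:] t = 0})"
    by (auto simp: P1_def algebra_simps power2_eq_square)
  ultimately show ?thesis
    by (simp add: finite_subset)
qed

lemma Fab_quadratic_form_in_x:
  "Fab a b x0 x1 y0 y1 z0 z1 =
     (y1^2 * z0^2 + y0^2 * z0 * z1 + y1^2 * z1^2) * x0^2
     + y0 * y1 * (a * z0^2 + b * z1^2) * x0 * x1
     + (y0^2 * z0^2 + y1^2 * z0 * z1 + y0^2 * z1^2) * x1^2"
  by (simp add: Fab_def Q_def algebra_simps)

lemma Fab_quadratic_form_in_z:
  "Fab a b (fst x) (snd x) (fst y) (snd y) z0 z1 =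
     Q a x y * z0^2 + ((fst x)^2 * (fst y)^2 + (snd x)^2 * (snd y)^2) * z0 * z1 + Q b x y * z1^2"
  by (simp add: Fab_def)

lemma Fab_swap_xy: "Fab a b x0 x1 y0 y1 z0 z1 = Fab a b y0 y1 x0 x1 z0 z1"
  by (simp add: Fab_def Q_def algebra_simps)

lemma Fab_quadratic_form_in_y:
  "Fab a b x0 x1 y0 y1 z0 z1 =
     (x1^2 * z0^2 + x0^2 * z0 * z1 + x1^2 * z1^2) * y0^2
     + x0 * x1 * (a * z0^2 + b * z1^2) * y0 * y1
     + (x0^2 * z0^2 + x1^2 * z0 * z1 + x0^2 * z1^2) * y1^2"
  by (metis Fab_swap_xy Fab_quadratic_form_in_x)

lemma x_form_nondegenerate:
  fixes a b :: complex
  assumes "(y0, y1) \<in> P1" "(z0, z1) \<in> P1" "a^2 - a*b + b^2 \<noteq> 0"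
  shows "\<not> (y1^2 * z0^2 + y0^2 * z0 * z1 + y1^2 * z1^2 = 0
            \<and> y0 * y1 * (a * z0^2 + b * z1^2) = 0
            \<and> y0^2 * z0^2 + y1^2 * z0 * z1 + y0^2 * z1^2 = 0)"
proof
  assume coeffs: "y1^2 * z0^2 + y0^2 * z0 * z1 + y1^2 * z1^2 = 0
            \<and> y0 * y1 * (a * z0^2 + b * z1^2) = 0
            \<and> y0^2 * z0^2 + y1^2 * z0 * z1 + y0^2 * z1^2 = 0"
  from assms(1) show False
  proof (cases rule: P1_cases)
    case infinity
    with assms(2) coeffs show False
      by (cases rule: P1_cases) auto
  next
    case (affine t)
    from assms(2) show False
    proof (cases rule: P1_cases)
      case infinity
      with affine coeffs show False by simp
    next
      case (affine s)
      with \<open>(y0, y1) = (1, t)\<close> coeffs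
      have A: "t^2 + s + t^2 * s^2 = 0" and B: "t * (a + b * s^2) = 0"
        and C: "1 + t^2 * s + s^2 = 0"
        by simp_all
      have "t \<noteq> 0"
        using A C by auto
      with B have "a = - b * s^2"
        by (simp add: eq_neg_iff_add_eq_0)
      then have factored: "a^2 - a*b + b^2 = b^2 * ((s^2 + s + 1) * (s^2 - s + 1))"
        by (simp add: algebra_simps power2_eq_square)
      have "(t^2 - 1) * (s^2 - s + 1) = (t^2 + s + t^2 * s^2) - (1 + t^2 * s + s^2)"
        by (simp add: algebra_simps power2_eq_square)
      with A C have "t^2 = 1 \<or> s^2 - s + 1 = 0"
        by simp
      moreover have "t^2 = 1 \<Longrightarrow> s^2 + s + 1 = 0"
        using A by (simp add: algebra_simps)
      ultimately have "a^2 - a*b + b^2 = 0"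
        using factored by auto
      with assms(3) show False by simp
    qed
  qed
qed

lemma z_form_nondegenerate:
  fixes a b :: complex
  assumes "x \<in> P1" "y \<in> P1" "a \<noteq> b"
  shows "\<not> (Q a x y = 0 \<and> (fst x)^2 * (fst y)^2 + (snd x)^2 * (snd y)^2 = 0 \<and> Q b x y = 0)"
proof
  assume coeffs: "Q a x y = 0 \<and> (fst x)^2 * (fst y)^2 + (snd x)^2 * (snd y)^2 = 0 \<and> Q b x y = 0"
  have "Q a x y - Q b x y = (a - b) * (fst x * snd x * fst y * snd y)"
    by (simp add: Q_def algebra_simps)
  with coeffs assms(3) have monomial: "fst x * snd x * fst y * snd y = 0"
    by simp
  from assms(1,2) coeffs monomial show False
    by (auto simp: P1_def Q_def)
qed

lemma finite_fibres_pi_x: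
  assumes "a^2 - a*b + b^2 \<noteq> 0"
  shows "finite {p \<in> Xab a b. pi_x p = (y, z)}"
proof (cases "y \<in> P1 \<and> z \<in> P1")
  case True
  let ?zeros = "{x \<in> P1. Fab a b (fst x) (snd x) (fst y) (snd y) (fst z) (snd z) = 0}"
  have "finite ?zeros"
    unfolding Fab_quadratic_form_in_x
    using True by (intro finite_P1_zeros_quadratic_form x_form_nondegenerate assms) auto
  moreover have "{p \<in> Xab a b. pi_x p = (y, z)} = (\<lambda>x. (x, y, z)) ` ?zeros"
    using True by (auto simp: Xab_def pi_x_def)
  ultimately show ?thesis by simp
next
  case False
  then have "{p \<in> Xab a b. pi_x p = (y, z)} = {}"
    by (auto simp: Xab_def pi_x_def)
  then show ?thesis by (simp only: finite.emptyI)
qed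

lemma finite_fibres_pi_y:
  assumes "a^2 - a*b + b^2 \<noteq> 0"
  shows "finite {p \<in> Xab a b. pi_y p = (x, z)}"
proof (cases "x \<in> P1 \<and> z \<in> P1")
  case True
  let ?zeros = "{y \<in> P1. Fab a b (fst x) (snd x) (fst y) (snd y) (fst z) (snd z) = 0}"
  have "finite ?zeros"
    unfolding Fab_quadratic_form_in_y
    using True by (intro finite_P1_zeros_quadratic_form x_form_nondegenerate assms) auto
  moreover have "{p \<in> Xab a b. pi_y p = (x, z)} = (\<lambda>y. (x, y, z)) ` ?zeros"
    using True by (auto simp: Xab_def pi_y_def)
  ultimately show ?thesis by simp
next
  case False
  then have "{p \<in> Xab a b. pi_y p = (x, z)} = {}"
    by (auto simp: Xab_def pi_y_def)
  then show ?thesis by (simp only: finite.emptyI)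
qed

lemma finite_fibres_pi_z:
  assumes "a \<noteq> b"
  shows "finite {p \<in> Xab a b. pi_z p = (x, y)}"
proof (cases "x \<in> P1 \<and> y \<in> P1")
  case True
  let ?zeros = "{z \<in> P1. Fab a b (fst x) (snd x) (fst y) (snd y) (fst z) (snd z) = 0}"
  have "finite ?zeros"
    unfolding Fab_quadratic_form_in_z
    using True by (intro finite_P1_zeros_quadratic_form z_form_nondegenerate assms) auto
  moreover have "{p \<in> Xab a b. pi_z p = (x, y)} = (\<lambda>z. (x, y, z)) ` ?zeros"
    using True by (auto simp: Xab_def pi_z_def)
  ultimately show ?thesis by simp
next
  case False
  then have "{p \<in> Xab a b. pi_z p = (x, y)} = {}"
    by (auto simp: Xab_def pi_z_def)
  then show ?thesis by (simp only: finite.emptyI)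
qed

theorem lemma4p2:
  fixes a b :: complex
  assumes "smooth_X a b"
  shows "(a^2 - a*b + b^2 \<noteq> 0 \<longrightarrow>
            \<not> contracts_curve pi_x (Xab a b) \<and> \<not> contracts_curve pi_y (Xab a b))
       \<and> (a \<noteq> b \<longrightarrow> \<not> contracts_curve pi_z (Xab a b))"
  unfolding contracts_curve_def split_paired_Ex
  using finite_fibres_pi_x finite_fibres_pi_y finite_fibres_pi_z by blast

end
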